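(* Let $K$ be a field, $S=K[x_1,\dots,x_n]$, $A\subseteq\{1,\dots,n\}$, $f=\prod_{j\in A}x_j$, let $J\subset I\subset S_f$ be monomial ideals, and let $t_1,\dots,t_r$ be new variables. Then $$\operatorname{sdepth}(I/J)[t_1^{\pm1},\dots,t_r^{\pm1}]=\operatorname{sdepth}(I/J)+r.$$
   Context: $S_f=K[x_1,\dots,x_n,x_j^{-1}:j\in A]$, with $K$-basis the monomials $x_1^{a_1}\cdots x_n^{a_n}$, $a_j\in\mathbb Z$ for $j\in A$, $a_j\in\mathbb N$ otherwise; monomial ideals are ideals generated by monomials, and $I/J$ has $K$-basis the monomials in $I\setminus J$. A Stanley space of $I/J$ is $uK[Z]$, the $K$-span of all $uw$ ($w$ a monomial in elements of $Z$), where $u\in I\setminus J$ is a monomial, $Z$ a subset of the variables and of the inverses of the inverted variables containing no pair $\{x_j,x_j^{-1}\}$, and $uK[Z]$ is a free $K[Z]$-submodule of $I/J$; its dimension is $|Z|$. Stanley decompositions are finite direct sums of Stanley spaces equal to $I/J$; $\operatorname{sdepth}$ of a decomposition is the minimal dimension of its spaces, and $\operatorname{sdepth}(I/J)$ the maximum over all decompositions. $(I/J)[t_1^{\pm1},\dots,t_r^{\pm1}]=IT/JT$ where $T=S_f[t_1^{\pm1},\dots,t_r^{\pm1}]$, the localization of $K[x_1,\dots,x_n,t_1,\dots,t_r]$ at $f t_1\cdots t_r$, with Stanley depth defined in the same way. *)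

theory Defs
  imports Main "HOL-Library.Extended_Nat"
begin

text \<open>Monomials of S_f = K[x_0,...,x_(n-1), x_j^-1 : j in A] are represented by their
exponent vectors (nat => int), supported on {0..<n}; exponents of non-inverted
variables are nonnegative.  A monomial ideal of S_f is represented by its set of
monomials (which determines it and forms a K-basis of it); the field K plays no role.\<close>

definition lmonos :: "nat \<Rightarrow> nat set \<Rightarrow> (nat \<Rightarrow> int) set" where
  "lmonos n A = {a. (\<forall>j. n \<le> j \<longrightarrow> a j = 0) \<and> (\<forall>j<n. j \<notin> A \<longrightarrow> 0 \<le> a j)}"

definition mono_ideal :: "nat \<Rightarrow> nat set \<Rightarrow> (nat \<Rightarrow> int) set \<Rightarrow> bool" where
  "mono_ideal n A I \<longleftrightarrow> I \<subseteq> lmonos n A \<and>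
     (\<forall>u\<in>I. \<forall>v\<in>lmonos n A. (\<lambda>i. u i + v i) \<in> I)"

text \<open>Admissible sets Z: (j,True) stands for x_j, (j,False) for x_j^-1 (only for j in A);
no pair {x_j, x_j^-1}.\<close>

definition stanley_dirs :: "nat \<Rightarrow> nat set \<Rightarrow> (nat \<times> bool) set \<Rightarrow> bool" where
  "stanley_dirs n A Z \<longleftrightarrow> Z \<subseteq> {(j, b). j < n \<and> (b \<or> j \<in> A)} \<and>
     \<not> (\<exists>j. (j, True) \<in> Z \<and> (j, False) \<in> Z)"

definition dir :: "nat \<times> bool \<Rightarrow> nat \<Rightarrow> int" where
  "dir z = (\<lambda>i. if i = fst z then (if snd z then 1 else -1) else 0)"

text \<open>The monomials u*w, w a monomial in the elements of Z (a K-basis of uK[Z]).\<close>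

definition sspace :: "(nat \<Rightarrow> int) \<Rightarrow> (nat \<times> bool) set \<Rightarrow> (nat \<Rightarrow> int) set" where
  "sspace u Z = {(\<lambda>i. u i + (\<Sum>z\<in>Z. int (c z) * dir z i)) | c :: nat \<times> bool \<Rightarrow> nat. True}"

text \<open>uK[Z] is a Stanley space of I/J: u a monomial in I \ J, Z admissible, and uK[Z]
a free K[Z]-submodule of I/J, i.e. no u*w lies in J (distinct w give distinct u*w
automatically, and u*w lies in I since I is an ideal).\<close>

definition is_stanley_space ::
  "nat \<Rightarrow> nat set \<Rightarrow> (nat \<Rightarrow> int) set \<Rightarrow> (nat \<Rightarrow> int) set \<Rightarrow> (nat \<Rightarrow> int) \<Rightarrow> (nat \<times> bool) set \<Rightarrow> bool" where
  "is_stanley_space n A I J u Z \<longleftrightarrow> u \<in> I - J \<and> stanley_dirs n A Z \<and> sspace u Z \<subseteq> I - J"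

text \<open>A Stanley decomposition: finitely many Stanley spaces whose sum is direct and equals I/J;
for monomial subspaces this means their monomial sets partition I \ J.\<close>

definition stanley_decomp ::
  "nat \<Rightarrow> nat set \<Rightarrow> (nat \<Rightarrow> int) set \<Rightarrow> (nat \<Rightarrow> int) set \<Rightarrow> ((nat \<Rightarrow> int) \<times> (nat \<times> bool) set) set \<Rightarrow> bool" where
  "stanley_decomp n A I J D \<longleftrightarrow> finite D \<and>
     (\<forall>(u, Z)\<in>D. is_stanley_space n A I J u Z) \<and>
     (\<forall>p\<in>D. \<forall>q\<in>D. p \<noteq> q \<longrightarrow> sspace (fst p) (snd p) \<inter> sspace (fst q) (snd q) = {}) \<and>
     (\<Union>(u, Z)\<in>D. sspace u Z) = I - J"

definition sdepth_decomp :: "((nat \<Rightarrow> int) \<times> (nat \<times> bool) set) set \<Rightarrow> nat" where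
  "sdepth_decomp D = Min ((\<lambda>(u, Z). card Z) ` D)"

definition sdepth :: "nat \<Rightarrow> nat set \<Rightarrow> (nat \<Rightarrow> int) set \<Rightarrow> (nat \<Rightarrow> int) set \<Rightarrow> enat" where
  "sdepth n A I J = (SUP D \<in> {D. stanley_decomp n A I J D}. enat (sdepth_decomp D))"

text \<open>Extension IT of a monomial ideal I of S_f to T = S_f[t_1^{+-1},...,t_r^{+-1}], where
the t's are the variables n..n+r-1 and are inverted: the ideal of T generated by I.\<close>

definition laurent_vars :: "nat \<Rightarrow> nat set \<Rightarrow> nat \<Rightarrow> nat set" where
  "laurent_vars n A r = A \<union> {n..<n + r}"

definition ext_ideal :: "nat \<Rightarrow> nat set \<Rightarrow> nat \<Rightarrow> (nat \<Rightarrow> int) set \<Rightarrow> (nat \<Rightarrow> int) set" where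
  "ext_ideal n A r I = {v. \<exists>u\<in>I. \<exists>w\<in>lmonos (n + r) (laurent_vars n A r). v = (\<lambda>i. u i + w i)}"

end

theory Submission
  imports Defs
begin

text \<open>A Stanley space uK[Z] is the set of lattice points of a translated orthant, which is
  cut out coordinatewise. Adjoining one Laurent variable t, a decomposition of I/J into spaces
  uK[Z] gives one of (I/J)[t^{+-1}] into the spaces uK[Z, t] and u t^-1 K[Z, t^-1], so the
  Stanley depth goes up by at least one. Conversely, intersecting the spaces of a
  decomposition of (I/J)[t^{+-1}] with the hyperplane where t has exponent 0 decomposes I/J,
  and each space loses at most one direction. Both estimates compare maximal decompositions,
  so they need that Stanley decompositions of I/J exist at all; this follows by induction on
  the number of variables from the ascending chain condition for monomial ideals of S_f.\<close>

section \<open>Stanley spaces as boxes\<close>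

definition box_coord :: "(nat \<Rightarrow> int) \<Rightarrow> (nat \<times> bool) set \<Rightarrow> nat \<Rightarrow> int \<Rightarrow> bool" where
  "box_coord u Z i x \<longleftrightarrow>
     (if (i, True) \<in> Z then u i \<le> x else if (i, False) \<in> Z then x \<le> u i else x = u i)"

definition sbox :: "(nat \<Rightarrow> int) \<Rightarrow> (nat \<times> bool) set \<Rightarrow> (nat \<Rightarrow> int) set" where
  "sbox u Z = {v. \<forall>i. box_coord u Z i (v i)}"

lemma dir_eq: "dir z i = of_bool (z = (i, True)) - of_bool (z = (i, False))"
  by (cases z) (auto simp: dir_def)

lemma sum_dir:
  assumes "finite Z"
  shows "(\<Sum>z\<in>Z. int (c z) * dir z i) =
    (if (i, True) \<in> Z then int (c (i, True)) else 0) - (if (i, False) \<in> Z then int (c (i, False)) else 0)"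
  using assms by (simp add: dir_eq right_diff_distrib sum_subtractf)

lemma sspace_eq_sbox:
  assumes "finite Z" and "\<not> (\<exists>j. (j, True) \<in> Z \<and> (j, False) \<in> Z)"
  shows "sspace u Z = sbox u Z"
proof (intro set_eqI iffI)
  fix v assume "v \<in> sspace u Z"
  then obtain c where "v = (\<lambda>i. u i + (\<Sum>z\<in>Z. int (c z) * dir z i))"
    unfolding sspace_def by blast
  then show "v \<in> sbox u Z"
    using assms(2) by (auto simp: sbox_def box_coord_def sum_dir[OF assms(1)])
next
  fix v assume v: "v \<in> sbox u Z"
  define c where "c z = nat (if snd z then v (fst z) - u (fst z) else u (fst z) - v (fst z))" for z
  have "v i = u i + (\<Sum>z\<in>Z. int (c z) * dir z i)" for i
    using v assms(2) unfolding sum_dir[OF assms(1)] sbox_def box_coord_def c_def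
    by (cases "(i, True) \<in> Z"; cases "(i, False) \<in> Z"; force)
  then show "v \<in> sspace u Z"
    unfolding sspace_def by blast
qed

lemma sbox_split:
  "v \<in> sbox u Z \<longleftrightarrow>
     v(k := 0) \<in> sbox (u(k := 0)) (Z - {(k, True), (k, False)}) \<and> box_coord u Z k (v k)"
proof -
  have coord: "box_coord (u(k := 0)) (Z - {(k, True), (k, False)}) i ((v(k := 0)) i) \<longleftrightarrow>
      i = k \<or> box_coord u Z i (v i)" for i
    by (cases "i = k") (auto simp: box_coord_def)
  show ?thesis
    unfolding sbox_def mem_Collect_eq coord by auto
qed

lemma sbox_coord_fixed: "(k, True) \<notin> Z \<Longrightarrow> (k, False) \<notin> Z \<Longrightarrow> v \<in> sbox u Z \<Longrightarrow> v k = u k"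
  by (auto simp: sbox_def box_coord_def dest: spec[of _ k])

lemma u_in_sspace: "u \<in> sspace u Z"
  unfolding sspace_def by (rule CollectI, rule exI[of _ "\<lambda>_. 0"]) simp

lemma sspace_empty: "sspace u {} = {u}"
  unfolding sspace_def by simp

lemma stanley_dirs_finite: "stanley_dirs n A Z \<Longrightarrow> finite Z"
  unfolding stanley_dirs_def by (rule finite_subset[of _ "{..<n} \<times> UNIV"]) auto

lemma stanley_dirs_sspace_eq_sbox: "stanley_dirs n A Z \<Longrightarrow> sspace u Z = sbox u Z"
  by (rule sspace_eq_sbox) (auto simp: stanley_dirs_finite stanley_dirs_def)

lemma stanley_dirs_card:
  assumes "stanley_dirs n A Z"
  shows "card Z \<le> n"
proof -
  have "inj_on fst Z"
    using assms unfolding stanley_dirs_def by (intro inj_onI) (metis (full_types) prod.collapse)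
  then have "card Z = card (fst ` Z)"
    by (simp add: card_image)
  also have "\<dots> \<le> card {..<n}"
    using assms by (intro card_mono) (auto simp: stanley_dirs_def)
  finally show ?thesis by simp
qed

lemma stanley_dirs_last: "stanley_dirs n A Z \<Longrightarrow> (n, b) \<notin> Z"
  unfolding stanley_dirs_def by auto

lemma stanley_dirs_Suc: "stanley_dirs n A Z \<Longrightarrow> A \<subseteq> B \<Longrightarrow> stanley_dirs (Suc n) B Z"
  unfolding stanley_dirs_def by auto

lemma stanley_dirs_insert:
  "stanley_dirs n A Z \<Longrightarrow> A \<subseteq> B \<Longrightarrow> b \<or> n \<in> B \<Longrightarrow> stanley_dirs (Suc n) B (insert (n, b) Z)"
  unfolding stanley_dirs_def by auto

lemma stanley_dirs_remove:
  "stanley_dirs (Suc n) (insert n A) Z \<Longrightarrow> stanley_dirs n A (Z - {(n, True), (n, False)})"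
  unfolding stanley_dirs_def by auto

lemma card_remove_dir:
  assumes "stanley_dirs (Suc n) B Z"
  shows "card Z \<le> Suc (card (Z - {(n, True), (n, False)}))"
proof -
  have fin: "finite Z"
    by (rule stanley_dirs_finite[OF assms])
  have "Z \<subseteq> insert (n, (n, True) \<in> Z) (Z - {(n, True), (n, False)})"
    using assms unfolding stanley_dirs_def by auto
  then have "card Z \<le> card (insert (n, (n, True) \<in> Z) (Z - {(n, True), (n, False)}))"
    by (rule card_mono[rotated]) (simp add: fin)
  also have "\<dots> \<le> Suc (card (Z - {(n, True), (n, False)}))"
    by (simp add: card_insert_if fin)
  finally show ?thesis .
qed

lemma sspace_extend_fixed:
  assumes "stanley_dirs n A Z" "u n = 0"
  shows "sspace (u(n := a)) Z = {v. v(n := 0) \<in> sspace u Z \<and> v n = a}"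
proof -
  have "(u(n := a))(n := 0) = u" "Z - {(n, True), (n, False)} = Z"
    using assms stanley_dirs_last[OF assms(1)] by auto
  then show ?thesis
    unfolding stanley_dirs_sspace_eq_sbox[OF assms(1)]
    using sbox_split[of _ "u(n := a)" Z n] stanley_dirs_last[OF assms(1)]
    by (auto simp: box_coord_def)
qed

lemma sspace_extend_insert:
  assumes "stanley_dirs n A Z" "u n = 0"
  shows "sspace (u(n := a)) (insert (n, b) Z) =
    {v. v(n := 0) \<in> sspace u Z \<and> (if b then a \<le> v n else v n \<le> a)}"
proof -
  have dirs: "stanley_dirs (Suc n) (insert n A) (insert (n, b) Z)"
    by (rule stanley_dirs_insert[OF assms(1)]) auto
  have "(u(n := a))(n := 0) = u" "insert (n, b) Z - {(n, True), (n, False)} = Z"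
    using assms stanley_dirs_last[OF assms(1)] by auto
  then show ?thesis
    unfolding stanley_dirs_sspace_eq_sbox[OF assms(1)] stanley_dirs_sspace_eq_sbox[OF dirs]
    using sbox_split[of _ "u(n := a)" "insert (n, b) Z" n] stanley_dirs_last[OF assms(1)]
    by (cases b) (auto simp: box_coord_def)
qed

lemma sspace_hyperplane:
  assumes "stanley_dirs (Suc n) (insert n A) Z"
  shows "{v \<in> sspace u Z. v n = 0} =
    (if box_coord u Z n 0 then sspace (u(n := 0)) (Z - {(n, True), (n, False)}) else {})"
proof -
  let ?Z = "Z - {(n, True), (n, False)}"
  have fixed: "v n = 0" if "v \<in> sbox (u(n := 0)) ?Z" for v
    using sbox_coord_fixed[OF _ _ that] by simp
  have "v \<in> sbox u Z \<and> v n = 0 \<longleftrightarrow> v \<in> sbox (u(n := 0)) ?Z \<and> box_coord u Z n 0" for v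
  proof
    assume v: "v \<in> sbox u Z \<and> v n = 0"
    then have "v(n := 0) = v"
      by (simp add: fun_upd_idem)
    moreover have "v(n := 0) \<in> sbox (u(n := 0)) ?Z \<and> box_coord u Z n (v n)"
      using v sbox_split[of v u Z n] by blast
    ultimately show "v \<in> sbox (u(n := 0)) ?Z \<and> box_coord u Z n 0"
      using v by simp
  next
    assume v: "v \<in> sbox (u(n := 0)) ?Z \<and> box_coord u Z n 0"
    then have "v n = 0"
      using fixed by blast
    moreover from this have "v(n := 0) = v"
      by (simp add: fun_upd_idem)
    ultimately show "v \<in> sbox u Z \<and> v n = 0"
      using v sbox_split[of v u Z n] by auto
  qed
  then show ?thesis
    unfolding stanley_dirs_sspace_eq_sbox[OF assms]
      stanley_dirs_sspace_eq_sbox[OF stanley_dirs_remove[OF assms]]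
    by auto
qed

section \<open>Stanley decompositions of sets of monomials\<close>

definition stanley_decomp_on ::
  "nat \<Rightarrow> nat set \<Rightarrow> (nat \<Rightarrow> int) set \<Rightarrow> ((nat \<Rightarrow> int) \<times> (nat \<times> bool) set) set \<Rightarrow> bool" where
  "stanley_decomp_on n A M D \<longleftrightarrow> finite D \<and>
     (\<forall>p\<in>D. stanley_dirs n A (snd p) \<and> sspace (fst p) (snd p) \<subseteq> M) \<and>
     (\<forall>p\<in>D. \<forall>q\<in>D. p \<noteq> q \<longrightarrow> sspace (fst p) (snd p) \<inter> sspace (fst q) (snd q) = {}) \<and>
     (\<Union>p\<in>D. sspace (fst p) (snd p)) = M"

definition sdepth_on :: "nat \<Rightarrow> nat set \<Rightarrow> (nat \<Rightarrow> int) set \<Rightarrow> enat" where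
  "sdepth_on n A M = (SUP D \<in> {D. stanley_decomp_on n A M D}. enat (sdepth_decomp D))"

lemma stanley_decomp_iff: "stanley_decomp n A I J D \<longleftrightarrow> stanley_decomp_on n A (I - J) D"
  unfolding stanley_decomp_def stanley_decomp_on_def is_stanley_space_def
  using u_in_sspace by (auto simp: split_beta)

lemma sdepth_eq_sdepth_on: "sdepth n A I J = sdepth_on n A (I - J)"
  unfolding sdepth_def sdepth_on_def stanley_decomp_iff ..

lemma stanley_decomp_onD:
  assumes "stanley_decomp_on n A M D" "p \<in> D"
  shows "stanley_dirs n A (snd p)" "sspace (fst p) (snd p) \<subseteq> M" "fst p \<in> M"
proof -
  show dirs: "stanley_dirs n A (snd p)" and sub: "sspace (fst p) (snd p) \<subseteq> M"
    using assms unfolding stanley_decomp_on_def by auto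
  show "fst p \<in> M"
    using sub u_in_sspace[of "fst p" "snd p"] by blast
qed

lemma stanley_decomp_on_extend:
  assumes "stanley_decomp_on n A M D"
    and "\<And>p. p \<in> D \<Longrightarrow> stanley_dirs n' A' (snd (g p)) \<and>
          sspace (fst (g p)) (snd (g p)) = {v. v(k := 0) \<in> sspace (fst p) (snd p) \<and> P (v k)}"
  shows "stanley_decomp_on n' A' {v. v(k := 0) \<in> M \<and> P (v k)} (g ` D)"
  unfolding stanley_decomp_on_def
proof (intro conjI ballI impI)
  show "finite (g ` D)"
    using assms(1) unfolding stanley_decomp_on_def by simp
next
  fix p' assume "p' \<in> g ` D"
  then obtain p where p: "p \<in> D" "p' = g p" by auto
  show "stanley_dirs n' A' (snd p')"
    using assms(2)[OF p(1)] p by simp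
  show "sspace (fst p') (snd p') \<subseteq> {v. v(k := 0) \<in> M \<and> P (v k)}"
    using assms p unfolding stanley_decomp_on_def by auto
next
  fix p' q' assume "p' \<in> g ` D" "q' \<in> g ` D" "p' \<noteq> q'"
  then obtain p q where p: "p \<in> D" "p' = g p" and q: "q \<in> D" "q' = g q" and "p \<noteq> q" by auto
  then have "sspace (fst p) (snd p) \<inter> sspace (fst q) (snd q) = {}"
    using assms(1) unfolding stanley_decomp_on_def by blast
  then show "sspace (fst p') (snd p') \<inter> sspace (fst q') (snd q') = {}"
    using assms(2)[OF p(1)] assms(2)[OF q(1)] p q by auto
next
  show "(\<Union>p'\<in>g ` D. sspace (fst p') (snd p')) = {v. v(k := 0) \<in> M \<and> P (v k)}"
    using assms unfolding stanley_decomp_on_def by auto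
qed

lemma stanley_decomp_on_UN:
  assumes "finite K" "\<And>k. k \<in> K \<Longrightarrow> stanley_decomp_on n A (M k) (D k)"
    and "\<And>k l. k \<in> K \<Longrightarrow> l \<in> K \<Longrightarrow> k \<noteq> l \<Longrightarrow> M k \<inter> M l = {}"
  shows "stanley_decomp_on n A (\<Union>k\<in>K. M k) (\<Union>k\<in>K. D k)"
  unfolding stanley_decomp_on_def
proof (intro conjI ballI impI)
  show "finite (\<Union>k\<in>K. D k)"
    using assms(1,2) unfolding stanley_decomp_on_def by auto
next
  fix p assume "p \<in> (\<Union>k\<in>K. D k)"
  then obtain k where k: "k \<in> K" "p \<in> D k" by auto
  then show "stanley_dirs n A (snd p)" "sspace (fst p) (snd p) \<subseteq> (\<Union>k\<in>K. M k)"
    using assms(2)[OF k(1)] unfolding stanley_decomp_on_def by auto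
next
  fix p q assume "p \<in> (\<Union>k\<in>K. D k)" "q \<in> (\<Union>k\<in>K. D k)" "p \<noteq> q"
  then obtain k l where k: "k \<in> K" "p \<in> D k" and l: "l \<in> K" "q \<in> D l" by auto
  have "sspace (fst p) (snd p) \<subseteq> M k" "sspace (fst q) (snd q) \<subseteq> M l"
    using assms(2)[OF k(1)] assms(2)[OF l(1)] k l unfolding stanley_decomp_on_def by auto
  then show "sspace (fst p) (snd p) \<inter> sspace (fst q) (snd q) = {}"
    using assms(2)[OF k(1)] assms(3)[OF k(1) l(1)] k l \<open>p \<noteq> q\<close>
    unfolding stanley_decomp_on_def by (cases "k = l") auto
next
  show "(\<Union>p\<in>(\<Union>k\<in>K. D k). sspace (fst p) (snd p)) = (\<Union>k\<in>K. M k)"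
    using assms(2) unfolding stanley_decomp_on_def by auto
qed

lemma stanley_decomp_on_Un:
  assumes "stanley_decomp_on n A M D" "stanley_decomp_on n A M' D'" "M \<inter> M' = {}"
  shows "stanley_decomp_on n A (M \<union> M') (D \<union> D')"
proof -
  have "stanley_decomp_on n A (\<Union>b\<in>{True, False}. if b then M else M')
      (\<Union>b\<in>{True, False}. if b then D else D')"
    by (rule stanley_decomp_on_UN) (use assms in \<open>auto simp: Int_commute\<close>)
  then show ?thesis
    by (simp add: Un_commute)
qed

lemma stanley_decomp_on_nonempty: "stanley_decomp_on n A M D \<Longrightarrow> M \<noteq> {} \<Longrightarrow> D \<noteq> {}"
  unfolding stanley_decomp_on_def by auto

lemma sdepth_decomp_eq: "sdepth_decomp D = Min ((\<lambda>p. card (snd p)) ` D)"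
  unfolding sdepth_decomp_def case_prod_beta' ..

lemma sdepth_decomp_le: "finite D \<Longrightarrow> p \<in> D \<Longrightarrow> sdepth_decomp D \<le> card (snd p)"
  unfolding sdepth_decomp_def by (rule Min_le) (auto simp: split_beta)

lemma sdepth_decomp_attained:
  assumes "finite D" "D \<noteq> {}"
  obtains p where "p \<in> D" "sdepth_decomp D = card (snd p)"
proof -
  have "sdepth_decomp D \<in> (\<lambda>(u, Z). card Z) ` D"
    unfolding sdepth_decomp_def using assms by (intro Min_in) auto
  then show ?thesis
    using that by (auto simp: split_beta)
qed

lemma sdepth_decomp_le_dim:
  assumes "stanley_decomp_on n A M D" "M \<noteq> {}"
  shows "sdepth_decomp D \<le> n"
proof -
  obtain p where "p \<in> D"
    using stanley_decomp_on_nonempty[OF assms] by blast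
  then show ?thesis
    using assms(1) sdepth_decomp_le stanley_dirs_card unfolding stanley_decomp_on_def
    by (meson le_trans)
qed

lemma sdepth_on_upper: "stanley_decomp_on n A M D \<Longrightarrow> enat (sdepth_decomp D) \<le> sdepth_on n A M"
  unfolding sdepth_on_def by (rule SUP_upper) auto

lemma sdepth_on_attained:
  assumes "M \<noteq> {}" "\<exists>D. stanley_decomp_on n A M D"
  obtains D where "stanley_decomp_on n A M D" "sdepth_on n A M = enat (sdepth_decomp D)"
proof -
  define V where "V = (\<lambda>D. enat (sdepth_decomp D)) ` {D. stanley_decomp_on n A M D}"
  have "V \<subseteq> enat ` {..n}"
    unfolding V_def using sdepth_decomp_le_dim[OF _ assms(1)] by auto
  then have "finite V"
    using finite_subset by blast
  moreover have "V \<noteq> {}"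
    unfolding V_def using assms(2) by auto
  ultimately have "Sup V \<in> V"
    using Max_in Max_Sup by metis
  then show ?thesis
    using that unfolding sdepth_on_def V_def by auto
qed

section \<open>Adjoining Laurent variables\<close>

lemma lmonos_add: "a \<in> lmonos n A \<Longrightarrow> b \<in> lmonos n A \<Longrightarrow> (\<lambda>i. a i + b i) \<in> lmonos n A"
  unfolding lmonos_def by auto

lemma lmonos_mono: "A \<subseteq> B \<Longrightarrow> lmonos n A \<subseteq> lmonos n B"
  unfolding lmonos_def by auto

lemma lmonos_zero: "(\<lambda>_. 0) \<in> lmonos n A"
  unfolding lmonos_def by auto

lemma lmonos_vanish: "a \<in> lmonos n A \<Longrightarrow> n \<le> j \<Longrightarrow> a j = 0"
  unfolding lmonos_def by auto

lemma lmonos_upd: "b \<in> lmonos n A \<Longrightarrow> n \<in> A \<or> 0 \<le> c \<Longrightarrow> b(n := c) \<in> lmonos (Suc n) A"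
  unfolding lmonos_def by (auto simp: Suc_le_eq)

lemma lmonos_Suc: "b \<in> lmonos n A \<Longrightarrow> b \<in> lmonos (Suc n) A"
  using lmonos_upd[of b n A 0] lmonos_vanish[of b n A n] by (simp add: fun_upd_idem)

lemma lmonos_restrict: "v \<in> lmonos (Suc n) A \<Longrightarrow> v(n := 0) \<in> lmonos n A"
  unfolding lmonos_def by (auto simp: Suc_le_eq)

lemma lmonos_nonneg: "v \<in> lmonos (Suc n) A \<Longrightarrow> n \<notin> A \<Longrightarrow> 0 \<le> v n"
  unfolding lmonos_def by auto

lemma mono_ideal_add: "mono_ideal n A I \<Longrightarrow> u \<in> I \<Longrightarrow> w \<in> lmonos n A \<Longrightarrow> (\<lambda>i. u i + w i) \<in> I"
  unfolding mono_ideal_def by auto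

lemma mono_ideal_subset: "mono_ideal n A I \<Longrightarrow> I \<subseteq> lmonos n A"
  unfolding mono_ideal_def by auto

definition trunc :: "nat \<Rightarrow> (nat \<Rightarrow> int) \<Rightarrow> (nat \<Rightarrow> int)" where
  "trunc n v = (\<lambda>i. if i < n then v i else 0)"

lemma trunc_lmonos: "v \<in> lmonos n A \<Longrightarrow> trunc n v = v"
  unfolding trunc_def lmonos_def by (auto simp: fun_eq_iff)

definition ext_set :: "nat \<Rightarrow> nat set \<Rightarrow> nat \<Rightarrow> (nat \<Rightarrow> int) set \<Rightarrow> (nat \<Rightarrow> int) set" where
  "ext_set n A r M = {v \<in> lmonos (n + r) (laurent_vars n A r). trunc n v \<in> M}"

lemma ext_ideal_eq_ext_set:
  assumes "mono_ideal n A I"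
  shows "ext_ideal n A r I = ext_set n A r I"
proof (intro set_eqI iffI)
  fix v assume "v \<in> ext_ideal n A r I"
  then obtain u w where u: "u \<in> I" and w: "w \<in> lmonos (n + r) (laurent_vars n A r)"
    and v: "v = (\<lambda>i. u i + w i)"
    unfolding ext_ideal_def by blast
  have ul: "u \<in> lmonos n A"
    using u mono_ideal_subset[OF assms] by auto
  have "trunc n w \<in> lmonos n A"
    using w unfolding lmonos_def laurent_vars_def trunc_def by auto
  then have "(\<lambda>i. u i + trunc n w i) \<in> I"
    by (rule mono_ideal_add[OF assms u])
  moreover have "trunc n v = (\<lambda>i. u i + trunc n w i)"
    using ul unfolding v trunc_def lmonos_def by auto
  moreover have "v \<in> lmonos (n + r) (laurent_vars n A r)"
    using ul w unfolding v lmonos_def laurent_vars_def by auto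
  ultimately show "v \<in> ext_set n A r I"
    unfolding ext_set_def by simp
next
  fix v assume v: "v \<in> ext_set n A r I"
  define w where "w = (\<lambda>i. if i < n then 0 else v i)"
  have "w \<in> lmonos (n + r) (laurent_vars n A r)"
    using v unfolding w_def ext_set_def lmonos_def laurent_vars_def by auto
  moreover have "v = (\<lambda>i. trunc n v i + w i)"
    unfolding w_def trunc_def by auto
  ultimately show "v \<in> ext_ideal n A r I"
    using v unfolding ext_ideal_def ext_set_def by blast
qed

lemma mem_ext_set_1: "v \<in> ext_set n A 1 M \<longleftrightarrow> v \<in> lmonos (Suc n) (insert n A) \<and> v(n := 0) \<in> M"
proof -
  have "trunc n v = v(n := 0)" if "v \<in> lmonos (Suc n) A'" for A'
    using that unfolding trunc_def lmonos_def by (auto simp: fun_eq_iff)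
  moreover have "laurent_vars n A 1 = insert n A"
    unfolding laurent_vars_def by auto
  ultimately show ?thesis
    unfolding ext_set_def by auto
qed

lemma mem_ext_set_1_iff:
  assumes "M \<subseteq> lmonos n A"
  shows "v \<in> ext_set n A 1 M \<longleftrightarrow> v(n := 0) \<in> M"
proof -
  have "v \<in> lmonos (Suc n) (insert n A)" if "v(n := 0) \<in> M"
  proof -
    have "v(n := 0) \<in> lmonos n (insert n A)"
      using that assms lmonos_mono[of A "insert n A" n] by blast
    then have "(v(n := 0))(n := v n) \<in> lmonos (Suc n) (insert n A)"
      by (rule lmonos_upd) simp
    then show ?thesis
      by simp
  qed
  then show ?thesis
    unfolding mem_ext_set_1 by blast
qed

lemma ext_set_1_hyperplane:
  assumes "M \<subseteq> lmonos n A"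
  shows "{v \<in> ext_set n A 1 M. v n = 0} = M"
proof -
  have "v \<in> lmonos (Suc n) (insert n A)" if "v \<in> M" for v
    using that assms lmonos_Suc[of v n "insert n A"] unfolding lmonos_def by auto
  then show ?thesis
    unfolding mem_ext_set_1 using assms lmonos_vanish[of _ n A n] by (auto simp: fun_upd_idem)
qed

lemma ext_set_0:
  assumes "M \<subseteq> lmonos n A"
  shows "ext_set n A 0 M = M"
proof -
  have "laurent_vars n A 0 = A"
    unfolding laurent_vars_def by simp
  then show ?thesis
    using assms unfolding ext_set_def by (auto simp: trunc_lmonos)
qed

lemma subset_ext_set:
  assumes "M \<subseteq> lmonos n A"
  shows "M \<subseteq> ext_set n A r M"
proof
  fix v assume "v \<in> M"
  moreover have "v \<in> lmonos (n + r) (laurent_vars n A r)"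
    using \<open>v \<in> M\<close> assms unfolding lmonos_def laurent_vars_def by auto
  ultimately show "v \<in> ext_set n A r M"
    using assms unfolding ext_set_def by (auto simp: trunc_lmonos)
qed

lemma ext_set_subset: "ext_set n A r M \<subseteq> lmonos (n + r) (laurent_vars n A r)"
  unfolding ext_set_def by auto

lemma laurent_vars_Suc: "laurent_vars n A (Suc r) = insert (n + r) (laurent_vars n A r)"
  unfolding laurent_vars_def by auto

lemma ext_set_Suc: "ext_set n A (Suc r) M = ext_set (n + r) (laurent_vars n A r) 1 (ext_set n A r M)"
proof -
  have "trunc n (trunc (n + r) v) = trunc n v" for v
    unfolding trunc_def by auto
  moreover have "trunc (n + r) v \<in> lmonos (n + r) (laurent_vars n A r)"
    if "v \<in> lmonos (n + Suc r) (laurent_vars n A (Suc r))" for v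
    using that unfolding lmonos_def laurent_vars_def trunc_def by auto
  moreover have "laurent_vars (n + r) (laurent_vars n A r) 1 = laurent_vars n A (Suc r)"
    unfolding laurent_vars_def by auto
  ultimately show ?thesis
    unfolding ext_set_def[of n A "Suc r"] ext_set_def[of "n + r" _ 1] ext_set_def[of n A r]
    by auto
qed

lemma stanley_decomp_on_ext_set_1:
  assumes "stanley_decomp_on n A M D" "M \<subseteq> lmonos n A"
  shows "\<exists>D'. stanley_decomp_on (Suc n) (insert n A) (ext_set n A 1 M) D' \<and>
    (D \<noteq> {} \<longrightarrow> sdepth_decomp D' = Suc (sdepth_decomp D))"
proof -
  define ext where "ext b p = ((fst p)(n := if b then 0 else -1), insert (n, b) (snd p))"
    for b and p :: "(nat \<Rightarrow> int) \<times> (nat \<times> bool) set"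
  have dirs: "stanley_dirs n A (snd p)" and base: "fst p n = 0" if "p \<in> D" for p
    using stanley_decomp_onD[OF assms(1) that] assms(2) lmonos_vanish by blast+
  have half: "stanley_decomp_on (Suc n) (insert n A)
      {v. v(n := 0) \<in> M \<and> (if b then 0 \<le> v n else v n \<le> -1)} (ext b ` D)" for b
  proof (rule stanley_decomp_on_extend[OF assms(1)])
    fix p assume p: "p \<in> D"
    have "stanley_dirs (Suc n) (insert n A) (insert (n, b) (snd p))"
      by (rule stanley_dirs_insert[OF dirs[OF p]]) auto
    then show "stanley_dirs (Suc n) (insert n A) (snd (ext b p)) \<and>
        sspace (fst (ext b p)) (snd (ext b p)) =
        {v. v(n := 0) \<in> sspace (fst p) (snd p) \<and> (if b then 0 \<le> v n else v n \<le> -1)}"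
      using sspace_extend_insert[of n A "snd p" "fst p", OF dirs[OF p] base[OF p]] by (auto simp: ext_def)
  qed
  have "ext_set n A 1 M =
      {v. v(n := 0) \<in> M \<and> (if True then 0 \<le> v n else v n \<le> -1)} \<union>
      {v. v(n := 0) \<in> M \<and> (if False then 0 \<le> v n else v n \<le> -1)}"
    unfolding set_eq_iff mem_ext_set_1_iff[OF assms(2)] by auto
  then have decomp: "stanley_decomp_on (Suc n) (insert n A) (ext_set n A 1 M) (ext True ` D \<union> ext False ` D)"
    by (simp only:) (rule stanley_decomp_on_Un[OF half half], auto)
  have "card (snd (ext b p)) = Suc (card (snd p))" if "p \<in> D" for p b
    using stanley_dirs_last[OF dirs[OF that]] stanley_dirs_finite[OF dirs[OF that]]
    by (simp add: ext_def)
  then have "(\<lambda>p. card (snd p)) ` ext b ` D = Suc ` (\<lambda>p. card (snd p)) ` D" for b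
    unfolding image_image by (intro image_cong) simp_all
  then have "(\<lambda>p. card (snd p)) ` (ext True ` D \<union> ext False ` D) = Suc ` (\<lambda>p. card (snd p)) ` D"
    by (simp add: image_Un)
  then have "D \<noteq> {} \<longrightarrow> sdepth_decomp (ext True ` D \<union> ext False ` D) = Suc (sdepth_decomp D)"
    using assms(1) unfolding sdepth_decomp_eq stanley_decomp_on_def
    by (auto intro!: mono_Min_commute[symmetric] monoI)
  with decomp show ?thesis by blast
qed

lemma stanley_decomp_on_hyperplane:
  assumes "stanley_decomp_on (Suc n) (insert n A) M D'"
  shows "\<exists>D. stanley_decomp_on n A {v \<in> M. v n = 0} D \<and>
    (D \<noteq> {} \<longrightarrow> sdepth_decomp D' \<le> Suc (sdepth_decomp D))"
proof -
  define restr where "restr p = ((fst p)(n := 0), snd p - {(n, True), (n, False)})"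
    for p :: "(nat \<Rightarrow> int) \<times> (nat \<times> bool) set"
  define D where "D = restr ` {p \<in> D'. box_coord (fst p) (snd p) n 0}"
  have fin: "finite D'" and dirs: "\<And>p. p \<in> D' \<Longrightarrow> stanley_dirs (Suc n) (insert n A) (snd p)"
    and disj: "\<And>p q. p \<in> D' \<Longrightarrow> q \<in> D' \<Longrightarrow> p \<noteq> q \<Longrightarrow> sspace (fst p) (snd p) \<inter> sspace (fst q) (snd q) = {}"
    and cover: "(\<Union>p\<in>D'. sspace (fst p) (snd p)) = M"
    using assms unfolding stanley_decomp_on_def by auto
  have slice: "{v \<in> sspace (fst p) (snd p). v n = 0} =
      (if box_coord (fst p) (snd p) n 0 then sspace (fst (restr p)) (snd (restr p)) else {})"
    if "p \<in> D'" for p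
    using sspace_hyperplane[OF dirs[OF that]] by (simp add: restr_def)
  have finD: "finite D"
    unfolding D_def using fin by simp
  have "(\<Union>q\<in>D. sspace (fst q) (snd q)) = (\<Union>p\<in>D'. {v \<in> sspace (fst p) (snd p). v n = 0})"
    unfolding D_def using slice by auto
  also have "\<dots> = {v \<in> M. v n = 0}"
    using cover by auto
  finally have cover': "(\<Union>q\<in>D. sspace (fst q) (snd q)) = {v \<in> M. v n = 0}" .
  have "stanley_decomp_on n A {v \<in> M. v n = 0} D"
    unfolding stanley_decomp_on_def
  proof (intro conjI ballI impI)
    show "finite D"
      by (rule finD)
  next
    fix q assume "q \<in> D"
    then obtain p where p: "p \<in> D'" "box_coord (fst p) (snd p) n 0" "q = restr p"
      unfolding D_def by auto
    show "stanley_dirs n A (snd q)"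
      using stanley_dirs_remove[OF dirs[OF p(1)]] p(3) by (simp add: restr_def)
    show "sspace (fst q) (snd q) \<subseteq> {v \<in> M. v n = 0}"
      using cover' \<open>q \<in> D\<close> by blast
  next
    fix q q' assume "q \<in> D" "q' \<in> D" "q \<noteq> q'"
    then obtain p p' where p: "p \<in> D'" "box_coord (fst p) (snd p) n 0" "q = restr p"
      and p': "p' \<in> D'" "box_coord (fst p') (snd p') n 0" "q' = restr p'" and "p \<noteq> p'"
      unfolding D_def by auto
    then show "sspace (fst q) (snd q) \<inter> sspace (fst q') (snd q') = {}"
      using slice[OF p(1)] slice[OF p'(1)] disj[OF p(1) p'(1)] by auto
  qed (rule cover')
  moreover have "sdepth_decomp D' \<le> Suc (sdepth_decomp D)" if ne: "D \<noteq> {}"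
  proof -
    obtain q where q: "q \<in> D" "sdepth_decomp D = card (snd q)"
      by (rule sdepth_decomp_attained[OF finD ne])
    then obtain p where p: "p \<in> D'" "q = restr p"
      unfolding D_def by auto
    have "card (snd p) \<le> Suc (card (snd q))"
      using card_remove_dir[OF dirs[OF p(1)]] unfolding p(2) restr_def by simp
    then show ?thesis
      using sdepth_decomp_le[OF fin p(1)] q(2) by linarith
  qed
  ultimately show ?thesis by blast
qed

lemma sdepth_on_ext_set_1:
  assumes "M \<subseteq> lmonos n A" "M \<noteq> {}" "\<exists>D. stanley_decomp_on n A M D"
  shows "sdepth_on (Suc n) (insert n A) (ext_set n A 1 M) = sdepth_on n A M + 1"
proof (rule antisym)
  show "sdepth_on (Suc n) (insert n A) (ext_set n A 1 M) \<le> sdepth_on n A M + 1"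
    unfolding sdepth_on_def[of "Suc n"]
  proof (rule SUP_least)
    fix D' assume "D' \<in> {D'. stanley_decomp_on (Suc n) (insert n A) (ext_set n A 1 M) D'}"
    then have "stanley_decomp_on (Suc n) (insert n A) (ext_set n A 1 M) D'"
      by simp
    from stanley_decomp_on_hyperplane[OF this] obtain D where D: "stanley_decomp_on n A M D"
      and le: "D \<noteq> {} \<longrightarrow> sdepth_decomp D' \<le> Suc (sdepth_decomp D)"
      unfolding ext_set_1_hyperplane[OF assms(1)] by blast
    have "enat (sdepth_decomp D') \<le> enat (sdepth_decomp D) + 1"
      using le stanley_decomp_on_nonempty[OF D assms(2)] by (simp add: one_enat_def)
    also have "\<dots> \<le> sdepth_on n A M + 1"
      using sdepth_on_upper[OF D] by (rule add_right_mono)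
    finally show "enat (sdepth_decomp D') \<le> sdepth_on n A M + 1" .
  qed
next
  obtain D where D: "stanley_decomp_on n A M D" "sdepth_on n A M = enat (sdepth_decomp D)"
    using sdepth_on_attained[OF assms(2,3)] by blast
  then obtain D' where D': "stanley_decomp_on (Suc n) (insert n A) (ext_set n A 1 M) D'"
    and "sdepth_decomp D' = Suc (sdepth_decomp D)"
    using stanley_decomp_on_ext_set_1[OF D(1) assms(1)] stanley_decomp_on_nonempty[OF D(1) assms(2)]
    by blast
  then have "sdepth_on n A M + 1 = enat (sdepth_decomp D')"
    using D(2) by (simp add: one_enat_def)
  also have "\<dots> \<le> sdepth_on (Suc n) (insert n A) (ext_set n A 1 M)"
    by (rule sdepth_on_upper[OF D'])
  finally show "sdepth_on n A M + 1 \<le> sdepth_on (Suc n) (insert n A) (ext_set n A 1 M)" .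
qed

lemma ext_set_decomposable:
  assumes "M \<subseteq> lmonos n A" "\<exists>D. stanley_decomp_on n A M D"
  shows "\<exists>D. stanley_decomp_on (n + r) (laurent_vars n A r) (ext_set n A r M) D"
proof (induction r)
  case 0
  then show ?case
    using assms by (simp add: ext_set_0 laurent_vars_def)
next
  case (Suc r)
  then obtain D where "stanley_decomp_on (n + r) (laurent_vars n A r) (ext_set n A r M) D"
    by blast
  from stanley_decomp_on_ext_set_1[OF this ext_set_subset] show ?case
    unfolding ext_set_Suc laurent_vars_Suc add_Suc_right by blast
qed

lemma sdepth_on_ext_set:
  assumes "M \<subseteq> lmonos n A" "M \<noteq> {}" "\<exists>D. stanley_decomp_on n A M D"
  shows "sdepth_on (n + r) (laurent_vars n A r) (ext_set n A r M) = sdepth_on n A M + enat r"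
proof (induction r)
  case 0
  then show ?case
    using assms(1) by (simp add: ext_set_0 laurent_vars_def zero_enat_def[symmetric])
next
  case (Suc r)
  have "ext_set n A r M \<noteq> {}"
    using subset_ext_set[OF assms(1)] assms(2) by blast
  then have "sdepth_on (n + Suc r) (laurent_vars n A (Suc r)) (ext_set n A (Suc r) M) =
      sdepth_on (n + r) (laurent_vars n A r) (ext_set n A r M) + 1"
    unfolding ext_set_Suc laurent_vars_Suc add_Suc_right
    using sdepth_on_ext_set_1[OF ext_set_subset _ ext_set_decomposable[OF assms(1,3)]] by blast
  then show ?case
    unfolding Suc by (simp add: one_enat_def add.assoc)
qed

section \<open>Existence of Stanley decompositions\<close>

definition slice :: "nat \<Rightarrow> nat set \<Rightarrow> (nat \<Rightarrow> int) set \<Rightarrow> int \<Rightarrow> (nat \<Rightarrow> int) set" where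
  "slice n A I k = {b \<in> lmonos n A. b(n := k) \<in> I}"

lemma slice_ideal:
  assumes "mono_ideal (Suc n) A I"
  shows "mono_ideal n A (slice n A I k)"
  unfolding mono_ideal_def
proof (intro conjI ballI)
  show "slice n A I k \<subseteq> lmonos n A"
    unfolding slice_def by auto
next
  fix b w assume b: "b \<in> slice n A I k" and w: "w \<in> lmonos n A"
  have "(\<lambda>i. (b(n := k)) i + w i) \<in> I"
    using b lmonos_Suc[OF w] mono_ideal_add[OF assms] unfolding slice_def by blast
  moreover have "(\<lambda>i. (b(n := k)) i + w i) = (\<lambda>i. b i + w i)(n := k)"
    using lmonos_vanish[OF w, of n] by auto
  ultimately show "(\<lambda>i. b i + w i) \<in> slice n A I k"
    using b lmonos_add[OF _ w] unfolding slice_def by auto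
qed

lemma mem_slice: "v \<in> lmonos (Suc n) A \<Longrightarrow> v \<in> I \<longleftrightarrow> v(n := 0) \<in> slice n A I (v n)"
  using lmonos_restrict unfolding slice_def by auto

lemma slice_mono:
  assumes "mono_ideal (Suc n) A I" "n \<in> A \<or> k \<le> l"
  shows "slice n A I k \<subseteq> slice n A I l"
proof
  fix b assume b: "b \<in> slice n A I k"
  have "(\<lambda>_. 0)(n := l - k) \<in> lmonos (Suc n) A"
    by (rule lmonos_upd[OF lmonos_zero]) (use assms(2) in auto)
  then have "(\<lambda>i. (b(n := k)) i + ((\<lambda>_. 0)(n := l - k)) i) \<in> I"
    using b mono_ideal_add[OF assms(1)] unfolding slice_def by blast
  moreover have "(\<lambda>i. (b(n := k)) i + ((\<lambda>_. 0)(n := l - k)) i) = b(n := l)"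
    by (auto simp: fun_eq_iff)
  ultimately show "b \<in> slice n A I l"
    using b unfolding slice_def by auto
qed

definition ideal_gen :: "nat \<Rightarrow> nat set \<Rightarrow> (nat \<Rightarrow> int) set \<Rightarrow> (nat \<Rightarrow> int) set" where
  "ideal_gen n A G = {v. \<exists>g\<in>G. \<exists>w\<in>lmonos n A. v = (\<lambda>i. g i + w i)}"

definition finitely_generated :: "nat \<Rightarrow> nat set \<Rightarrow> (nat \<Rightarrow> int) set \<Rightarrow> bool" where
  "finitely_generated n A I \<longleftrightarrow> (\<exists>G. finite G \<and> G \<subseteq> I \<and> I \<subseteq> ideal_gen n A G)"

lemma ideal_gen_subset: "mono_ideal n A I \<Longrightarrow> G \<subseteq> I \<Longrightarrow> ideal_gen n A G \<subseteq> I"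
  unfolding ideal_gen_def using mono_ideal_add by blast

lemma ascending_chain_stabilizes:
  assumes fg: "\<And>I. mono_ideal n A I \<Longrightarrow> finitely_generated n A I"
    and ideals: "\<And>k. mono_ideal n A (C k)" and mono: "\<And>k l. k \<le> l \<Longrightarrow> C k \<subseteq> C l"
  shows "\<exists>m::nat. \<forall>k. C k \<subseteq> C m"
proof -
  have "mono_ideal n A (\<Union>k. C k)"
    using ideals unfolding mono_ideal_def by blast
  then obtain G where G: "finite G" "G \<subseteq> (\<Union>k. C k)" "(\<Union>k. C k) \<subseteq> ideal_gen n A G"
    using fg unfolding finitely_generated_def by blast
  then obtain kf where kf: "\<And>g. g \<in> G \<Longrightarrow> g \<in> C (kf g)"
    by (metis UN_iff subsetD)
  define m where "m = Max (insert 0 (kf ` G))"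
  have "G \<subseteq> C m"
  proof
    fix g assume g: "g \<in> G"
    have "kf g \<le> m"
      unfolding m_def using G(1) g by auto
    then show "g \<in> C m"
      using mono kf[OF g] by blast
  qed
  then have "ideal_gen n A G \<subseteq> C m"
    by (rule ideal_gen_subset[OF ideals])
  then show ?thesis
    using G(3) by blast
qed

lemma slices_stabilize:
  assumes "\<And>J. mono_ideal n A J \<Longrightarrow> finitely_generated n A J" "mono_ideal (Suc n) A I"
  obtains m :: nat where "\<And>k. int m \<le> k \<Longrightarrow> slice n A I k = slice n A I (int m)"
proof -
  obtain m where m: "\<forall>k. slice n A I (int k) \<subseteq> slice n A I (int m)"
    using ascending_chain_stabilizes[OF assms(1), of "\<lambda>k. slice n A I (int k)"]
      slice_ideal[OF assms(2)] slice_mono[OF assms(2)] by force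
  have "slice n A I k = slice n A I (int m)" if "int m \<le> k" for k
    using m[rule_format, of "nat k"] slice_mono[OF assms(2), of "int m" k] that by auto
  then show ?thesis
    using that by blast
qed

lemma min_nat_eq_less_iff: "k < m \<Longrightarrow> 0 \<le> x \<and> min (nat x) m = k \<longleftrightarrow> x = int k"
  by (auto simp: min_def nat_eq_iff nat_le_iff)

lemma min_nat_eq_iff: "0 \<le> x \<and> min (nat x) m = m \<longleftrightarrow> int m \<le> x"
  by (auto simp: min_def nat_eq_iff nat_le_iff)

lemma slice_cap:
  assumes "\<And>k. int m \<le> k \<Longrightarrow> slice n A I k = slice n A I (int m)" "0 \<le> x"
  shows "slice n A I x = slice n A I (int (min (nat x) m))"
proof (cases "x < int m")
  case True
  then have "min (nat x) m = nat x"
    by (simp add: min_def nat_le_iff)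
  then show ?thesis
    using assms(2) by simp
next
  case False
  then have "m \<le> nat x"
    using nat_mono[of "int m" x] by simp
  then have "min (nat x) m = m"
    by simp
  then show ?thesis
    using assms(1)[of x] False by simp
qed

lemma mem_slice_cap:
  assumes "mono_ideal (Suc n) A I" "\<And>k. int m \<le> k \<Longrightarrow> slice n A I k = slice n A I (int m)"
    and "v \<in> I"
  shows "v(n := 0) \<in> slice n A I (int (min (nat (v n)) m))"
proof -
  have vl: "v \<in> lmonos (Suc n) A"
    using assms(3) mono_ideal_subset[OF assms(1)] by auto
  then have v: "v(n := 0) \<in> slice n A I (v n)"
    using mem_slice assms(3) by blast
  show ?thesis
  proof (cases "0 \<le> v n")
    case True
    then show ?thesis
      using slice_cap[OF assms(2) True] v by simp
  next
    case False
    then have "n \<in> A"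
      using lmonos_nonneg[OF vl] by auto
    then show ?thesis
      using v slice_mono[OF assms(1), of "v n" 0] False by auto
  qed
qed

lemma mono_ideal_finitely_generated: "mono_ideal n A I \<Longrightarrow> finitely_generated n A I"
proof (induction n arbitrary: I)
  case 0
  have "lmonos 0 A = {\<lambda>_. 0}"
    unfolding lmonos_def by auto
  then have "finite I" "I \<subseteq> ideal_gen 0 A I"
    using mono_ideal_subset[OF 0] finite_subset unfolding ideal_gen_def by fastforce+
  then show ?case
    unfolding finitely_generated_def by blast
next
  case (Suc n)
  obtain m where stable: "\<And>k. int m \<le> k \<Longrightarrow> slice n A I k = slice n A I (int m)"
    using slices_stabilize[OF Suc.IH Suc.prems] by blast
  have "\<forall>k::nat. \<exists>G. finite G \<and> G \<subseteq> slice n A I (int k) \<and> slice n A I (int k) \<subseteq> ideal_gen n A G"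
    using Suc.IH[OF slice_ideal[OF Suc.prems]] unfolding finitely_generated_def by blast
  then obtain G where G: "\<And>k. finite (G k)" "\<And>k. G k \<subseteq> slice n A I (int k)"
    "\<And>k. slice n A I (int k) \<subseteq> ideal_gen n A (G k)"
    by metis
  define H where "H = (\<Union>k\<le>m. (\<lambda>g. g(n := int k)) ` G k)"
  have "finite H"
    unfolding H_def using G(1) by auto
  moreover have "H \<subseteq> I"
    unfolding H_def using G(2) unfolding slice_def by auto
  moreover have "I \<subseteq> ideal_gen (Suc n) A H"
  proof
    fix v assume v: "v \<in> I"
    define k where "k = min (nat (v n)) m"
    obtain g w where g: "g \<in> G k" and w: "w \<in> lmonos n A" and e: "v(n := 0) = (\<lambda>i. g i + w i)"
      using mem_slice_cap[OF Suc.prems stable v] G(3) unfolding ideal_gen_def k_def by blast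
    have vl: "v \<in> lmonos (Suc n) A"
      using v mono_ideal_subset[OF Suc.prems] by auto
    have "int k \<le> v n" if "0 \<le> v n"
      using that unfolding k_def of_nat_min by (simp add: min_le_iff_disj)
    then have "n \<in> A \<or> 0 \<le> v n - int k"
      using lmonos_nonneg[OF vl] by auto
    then have "w(n := v n - int k) \<in> lmonos (Suc n) A"
      by (rule lmonos_upd[OF w])
    moreover have "v = (\<lambda>i. (g(n := int k)) i + (w(n := v n - int k)) i)"
    proof
      fix i show "v i = (g(n := int k)) i + (w(n := v n - int k)) i"
        using fun_cong[OF e, of i] by (cases "i = n") auto
    qed
    moreover have "g(n := int k) \<in> H"
      unfolding H_def k_def using g k_def by auto
    ultimately show "v \<in> ideal_gen (Suc n) A H"
      unfolding ideal_gen_def by blast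
  qed
  ultimately show ?case
    unfolding finitely_generated_def by blast
qed

lemma stanley_decomp_on_stack:
  assumes "\<And>k. k \<le> m \<Longrightarrow> \<exists>D. stanley_decomp_on n A (S k) D"
    and "\<And>k. k \<le> m \<Longrightarrow> S k \<subseteq> lmonos n A"
  shows "\<exists>D. stanley_decomp_on (Suc n) A {v. 0 \<le> v n \<and> v(n := 0) \<in> S (min (nat (v n)) m)} D"
proof -
  obtain D where D: "\<And>k. k \<le> m \<Longrightarrow> stanley_decomp_on n A (S k) (D k)"
    using assms(1) by metis
  define g where "g k p = (if k < m then ((fst p)(n := int k), snd p)
      else ((fst p)(n := int m), insert (n, True) (snd p)))"
    for k and p :: "(nat \<Rightarrow> int) \<times> (nat \<times> bool) set"
  have piece: "stanley_decomp_on (Suc n) A {v. v(n := 0) \<in> S k \<and> (0 \<le> v n \<and> min (nat (v n)) m = k)}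
      (g k ` D k)" if "k \<le> m" for k
  proof (rule stanley_decomp_on_extend[OF D[OF that]])
    fix p assume p: "p \<in> D k"
    have dirs: "stanley_dirs n A (snd p)" and "fst p \<in> S k"
      using stanley_decomp_onD[OF D[OF that] p] by blast+
    then have base: "fst p n = 0"
      using assms(2)[OF that] lmonos_vanish by blast
    show "stanley_dirs (Suc n) A (snd (g k p)) \<and> sspace (fst (g k p)) (snd (g k p)) =
        {v. v(n := 0) \<in> sspace (fst p) (snd p) \<and> (0 \<le> v n \<and> min (nat (v n)) m = k)}"
    proof (cases "k < m")
      case True
      then show ?thesis
        using stanley_dirs_Suc[OF dirs subset_refl]
          sspace_extend_fixed[of n A "snd p" "fst p" "int k", OF dirs base]
        unfolding g_def min_nat_eq_less_iff[OF True] by auto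
    next
      case False
      with that have "k = m"
        by simp
      have "stanley_dirs (Suc n) A (insert (n, True) (snd p))"
        by (rule stanley_dirs_insert[OF dirs subset_refl]) simp
      then show ?thesis
        using sspace_extend_insert[of n A "snd p" "fst p" "int m" True, OF dirs base]
        unfolding g_def \<open>k = m\<close> min_nat_eq_iff by simp
    qed
  qed
  have "min (nat x) m \<le> m" for x
    by simp
  then have "{v. 0 \<le> v n \<and> v(n := 0) \<in> S (min (nat (v n)) m)} =
      (\<Union>k\<in>{..m}. {v. v(n := 0) \<in> S k \<and> (0 \<le> v n \<and> min (nat (v n)) m = k)})"
    by auto
  moreover have "stanley_decomp_on (Suc n) A \<dots> (\<Union>k\<in>{..m}. g k ` D k)"
    using piece by (intro stanley_decomp_on_UN) auto
  ultimately show ?thesis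
    by auto
qed

lemma mem_diff_slice:
  assumes "mono_ideal (Suc n) A I"
  shows "v \<in> I - J \<longleftrightarrow> v \<in> lmonos (Suc n) A \<and> v(n := 0) \<in> slice n A I (v n) - slice n A J (v n)"
  using mem_slice[of v n A I] mem_slice[of v n A J] mono_ideal_subset[OF assms] by auto

lemma diff_eq_ext_set_slice:
  assumes "mono_ideal (Suc n) A I" "mono_ideal (Suc n) A J" "n \<in> A"
  shows "I - J = ext_set n A 1 (slice n A I 0 - slice n A J 0)"
proof (rule set_eqI)
  fix v
  have "slice n A K (v n) = slice n A K 0" if "mono_ideal (Suc n) A K" for K
    using slice_mono[OF that] assms(3) by blast
  then show "v \<in> I - J \<longleftrightarrow> v \<in> ext_set n A 1 (slice n A I 0 - slice n A J 0)"
    unfolding mem_diff_slice[OF assms(1)] mem_ext_set_1 insert_absorb[OF assms(3)]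
    using assms(1,2) by simp
qed

lemma diff_eq_stacked_slices:
  assumes "mono_ideal (Suc n) A I" "mono_ideal (Suc n) A J" "n \<notin> A"
    and "\<And>k. int m \<le> k \<Longrightarrow> slice n A I k = slice n A I (int m)"
    and "\<And>k. int m \<le> k \<Longrightarrow> slice n A J k = slice n A J (int m)"
  shows "I - J = {v. 0 \<le> v n \<and> v(n := 0) \<in>
    slice n A I (int (min (nat (v n)) m)) - slice n A J (int (min (nat (v n)) m))}"
proof (rule set_eqI)
  fix v
  have "v \<in> lmonos (Suc n) A" if "v(n := 0) \<in> slice n A I k" "0 \<le> v n" for k
  proof -
    have "(v(n := 0))(n := v n) \<in> lmonos (Suc n) A"
      using that unfolding slice_def by (intro lmonos_upd) auto
    then show ?thesis
      by simp
  qed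
  then show "v \<in> I - J \<longleftrightarrow> v \<in> {v. 0 \<le> v n \<and> v(n := 0) \<in>
      slice n A I (int (min (nat (v n)) m)) - slice n A J (int (min (nat (v n)) m))}"
    unfolding mem_diff_slice[OF assms(1)]
    using lmonos_nonneg[of v n A] assms(3) slice_cap[OF assms(4), of "v n"]
      slice_cap[OF assms(5), of "v n"]
    by auto
qed

text \<open>Induction on the last variable x_n: if it is inverted, I \ J is the extension of its
  slice at exponent 0; otherwise the slices stabilise from some exponent m on, and I \ J is
  stacked from the slices at the exponents 0, ..., m - 1 and the slice at m times K[x_n].\<close>

lemma stanley_decomp_on_exists:
  "mono_ideal n A I \<Longrightarrow> mono_ideal n A J \<Longrightarrow> \<exists>D. stanley_decomp_on n A (I - J) D"
proof (induction n arbitrary: I J)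
  case 0
  have "lmonos 0 A = {\<lambda>_. 0}"
    unfolding lmonos_def by auto
  then have sub: "I - J \<subseteq> {\<lambda>_. 0}"
    using mono_ideal_subset[OF 0(1)] by auto
  show ?case
  proof (cases "I - J = {}")
    case True
    show ?thesis
      unfolding True by (rule exI[of _ "{}"]) (simp add: stanley_decomp_on_def)
  next
    case False
    then have "I - J = {\<lambda>_. 0}"
      using sub by blast
    show ?thesis
      unfolding \<open>I - J = {\<lambda>_. 0}\<close>
      by (rule exI[of _ "{(\<lambda>_. 0, {})}"]) (auto simp: stanley_decomp_on_def sspace_empty stanley_dirs_def)
  qed
next
  case (Suc n)
  have slices: "\<exists>D. stanley_decomp_on n A (slice n A I k - slice n A J k) D" for k
    using Suc.IH[OF slice_ideal[OF Suc.prems(1)] slice_ideal[OF Suc.prems(2)]] .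
  have slices_sub: "slice n A I k - slice n A J k \<subseteq> lmonos n A" for k
    unfolding slice_def by auto
  show ?case
  proof (cases "n \<in> A")
    case True
    then show ?thesis
      using stanley_decomp_on_ext_set_1[OF _ slices_sub] slices[of 0]
        diff_eq_ext_set_slice[OF Suc.prems True] insert_absorb[OF True] by metis
  next
    case False
    obtain mI where mI: "\<And>k. int mI \<le> k \<Longrightarrow> slice n A I k = slice n A I (int mI)"
      using slices_stabilize[OF mono_ideal_finitely_generated Suc.prems(1)] by blast
    obtain mJ where mJ: "\<And>k. int mJ \<le> k \<Longrightarrow> slice n A J k = slice n A J (int mJ)"
      using slices_stabilize[OF mono_ideal_finitely_generated Suc.prems(2)] by blast
    define m where "m = max mI mJ"
    have "slice n A I k = slice n A I (int m)" "slice n A J k = slice n A J (int m)"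
      if "int m \<le> k" for k
      using that mI[of k] mI[of "int m"] mJ[of k] mJ[of "int m"] unfolding m_def by auto
    from diff_eq_stacked_slices[OF Suc.prems False this] show ?thesis
      using stanley_decomp_on_stack[of m n A "\<lambda>k. slice n A I (int k) - slice n A J (int k)"]
        slices slices_sub by simp
  qed
qed

theorem corollary4p2:
  fixes n r :: nat and A :: "nat set" and I J :: "(nat \<Rightarrow> int) set"
  assumes "A \<subseteq> {..<n}"
    and "mono_ideal n A I" and "mono_ideal n A J" and "J \<subset> I"
  shows "sdepth (n + r) (laurent_vars n A r) (ext_ideal n A r I) (ext_ideal n A r J)
         = sdepth n A I J + enat r"
proof -
  have "ext_ideal n A r I - ext_ideal n A r J = ext_set n A r (I - J)"
    unfolding ext_ideal_eq_ext_set[OF assms(2)] ext_ideal_eq_ext_set[OF assms(3)] ext_set_def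
    by auto
  moreover have "sdepth_on (n + r) (laurent_vars n A r) (ext_set n A r (I - J)) =
      sdepth_on n A (I - J) + enat r"
  proof (rule sdepth_on_ext_set)
    show "I - J \<subseteq> lmonos n A"
      using mono_ideal_subset[OF assms(2)] by auto
    show "I - J \<noteq> {}"
      using assms(4) by auto
    show "\<exists>D. stanley_decomp_on n A (I - J) D"
      by (rule stanley_decomp_on_exists[OF assms(2,3)])
  qed
  ultimately show ?thesis
    unfolding sdepth_eq_sdepth_on by simp
qed

end
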